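(* Let $n\ge 1$, $k\ge 1$, and let $s_1,\dots,s_k$ be nonnegative integers. There are $k$ players who independently each open one cereal box per time step; each box contains one of $n$ coupon types chosen uniformly at random, independently of everything else. Player $i$ is currently missing $s_i$ of the $n$ coupon types. Let $X_i(s_i)$ be the number of boxes player $i$ must open until they have all $n$ types, and let $$M(s_1,\dots,s_k):=\mathbb{E}\left[\max\{X_1(s_1),\dots,X_k(s_k)\}\right]$$ be the expected number of boxes required for the slowest player to complete the collection. Then, with $S:=\sum_{i=1}^k s_i$, $$M(s_1,\dots,s_k)=nH(S)-\frac{\left(H(S)-1\right)\sum_{i<j}s_is_j}{S(S-1)}+o(1).$$
   Context: $H(m)=\sum_{j=1}^m\frac1j$ denotes the $m$-th harmonic number. The term $o(1)$ denotes a quantity tending to $0$ as $n\to\infty$ with $k$ and $s_1,\dots,s_k$ fixed. *)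

theory Defs
  imports "HOL-Probability.Probability"
begin

text \<open>Sample space: omega (i,t) is the coupon type (in {0..<n}) found in the box
  opened by player i at time step t (t = 0,1,2,...). All boxes are i.i.d. uniform.\<close>
definition coupon_space :: "nat \<Rightarrow> ((nat \<times> nat) \<Rightarrow> nat) measure" where
  "coupon_space n = PiM UNIV (\<lambda>_. measure_pmf (pmf_of_set {..<n}))"

definition completion_time :: "nat set \<Rightarrow> (nat \<Rightarrow> nat) \<Rightarrow> nat" where
  "completion_time A f = (LEAST m. A \<subseteq> f ` {..<m})"

text \<open>Expected time for the slowest of the k players; player i misses the types in A i.\<close>
definition max_completion :: "nat \<Rightarrow> nat \<Rightarrow> (nat \<Rightarrow> nat set) \<Rightarrow> real" where
  "max_completion n k A =
     integral\<^sup>L (coupon_space n)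
       (\<lambda>\<omega>. real (Max ((\<lambda>i. completion_time (A i) (\<lambda>t. \<omega> (i, t))) ` {..<k})))"

end

theory Submission
  imports Defs "HOL-Real_Asymp.Real_Asymp"
begin

text \<open>
  Let \<open>P\<close> be the set of pairs \<open>(i, a)\<close> with \<open>a\<close> a type missing for player \<open>i\<close>.
  The slowest player is still collecting after \<open>m\<close> steps iff some \<open>(i, a) \<in> P\<close> is unseen
  by player \<open>i\<close> in the first \<open>m\<close> boxes, so inclusion-exclusion and summing the tail
  probabilities give the exact formula
  \<open>M = \<Sum>{} \<noteq> T \<subseteq> P. (-1)^(|T|+1) / (1 - q\<^sub>n(T))\<close> with
  \<open>q\<^sub>n(T) = \<Prod>\<^sub>i (1 - |T\<^sub>i| / n)\<close>, where \<open>T\<^sub>i\<close> are the types of player \<open>i\<close> in \<open>T\<close>.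
  Expanding \<open>1 / (1 - q\<^sub>n(T)) = n / |T| + e\<^sub>2(T) / |T|\<^sup>2 + o(1)\<close>, with \<open>e\<^sub>2(T)\<close> the
  second elementary symmetric function of the \<open>|T\<^sub>i|\<close>, leaves two alternating sums over
  subsets of \<open>P\<close>: \<open>\<Sum>T. (-1)^(|T|+1) / |T| = H(S)\<close>, and the \<open>e\<^sub>2\<close>-sum, which counts pairs
  \<open>x, y\<close> from different players, each with weight
  \<open>\<Sum>T \<supseteq> {x, y}. (-1)^(|T|+1) / |T|\<^sup>2 = -(H(S) - 1) / (S (S - 1))\<close>.
  Both sums reduce to Beta-integral identities by induction over the set.
\<close>

section \<open>Alternating sums over subsets\<close>

lemma sum_Pow_insert_card:
  fixes f :: "nat \<Rightarrow> 'b::comm_monoid_add"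
  assumes "finite A" "a \<notin> A"
  shows "(\<Sum>B\<in>Pow (insert a A). f (card B))
       = (\<Sum>B\<in>Pow A. f (card B)) + (\<Sum>B\<in>Pow A. f (Suc (card B)))"
proof -
  have "inj_on (insert a) (Pow A)"
    using assms(2) by (intro inj_onI) (metis PowD insert_ident subsetD)
  moreover have "Pow A \<inter> insert a ` Pow A = {}" using assms(2) by auto
  moreover have "card (insert a B) = Suc (card B)" if "B \<in> Pow A" for B
    using that assms by (auto intro: card_insert_disjoint finite_subset)
  ultimately show ?thesis
    using assms(1) by (simp add: Pow_insert sum.union_disjoint sum.reindex)
qed

text \<open>\<open>beta_nat a b\<close> is the Beta function value \<open>B(a + 1, b + 1)\<close>.\<close>
definition beta_nat :: "nat \<Rightarrow> nat \<Rightarrow> real" where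
  "beta_nat a b = fact a * fact b / fact (a + b + 1)"

lemma beta_nat_0_right: "beta_nat a 0 = 1 / (a + 1)"
  by (simp add: beta_nat_def)

lemma beta_nat_0_left: "beta_nat 0 b = 1 / (b + 1)"
  by (simp add: beta_nat_def)

lemma beta_nat_Suc_left: "beta_nat (Suc a) b = beta_nat a b * (a + 1) / (a + b + 2)"
  by (simp add: beta_nat_def field_simps)

lemma beta_nat_Suc_right: "beta_nat a (Suc b) = beta_nat a b * (b + 1) / (a + b + 2)"
  by (simp add: beta_nat_def field_simps)

lemma beta_nat_diff_Suc_right: "beta_nat a b - beta_nat a (Suc b) = beta_nat (Suc a) b"
  by (simp add: beta_nat_Suc_left beta_nat_Suc_right field_simps)

lemma sum_Pow_alternating_inverse:
  assumes "finite A"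
  shows "(\<Sum>B\<in>Pow A. (-1) ^ card B / real (card B + c + 1)) = beta_nat (card A) c"
  using assms
proof (induction A arbitrary: c rule: finite_induct)
  case empty
  then show ?case by (simp add: beta_nat_0_left)
next
  case (insert a A)
  have "(\<Sum>B\<in>Pow (insert a A). (-1) ^ card B / real (card B + c + 1))
      = (\<Sum>B\<in>Pow A. (-1) ^ card B / real (card B + c + 1))
        - (\<Sum>B\<in>Pow A. (-1) ^ card B / real (card B + Suc c + 1))"
    using sum_Pow_insert_card[OF insert(1,2), of "\<lambda>j. (-1) ^ j / real (j + c + 1)"]
    by (simp add: sum_negf)
  then show ?case
    using insert.IH[of c] insert.IH[of "Suc c"] insert(1,2) by (simp flip: beta_nat_diff_Suc_right)
qed

lemma sum_Pow_alternating_inverse_square: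
  assumes "finite A"
  shows "(\<Sum>B\<in>Pow A. (-1) ^ card B / real (card B + c + 1) ^ 2)
       = beta_nat (card A) c * (harm (card A + c + 1) - harm c)"
  using assms
proof (induction A arbitrary: c rule: finite_induct)
  case empty
  then show ?case by (simp add: beta_nat_0_left harm_Suc field_simps power2_eq_square)
next
  case (insert a A)
  define N where "N = card A"
  have "(\<Sum>B\<in>Pow (insert a A). (-1) ^ card B / real (card B + c + 1) ^ 2)
      = (\<Sum>B\<in>Pow A. (-1) ^ card B / real (card B + c + 1) ^ 2)
        - (\<Sum>B\<in>Pow A. (-1) ^ card B / real (card B + Suc c + 1) ^ 2)"
    using sum_Pow_insert_card[OF insert(1,2), of "\<lambda>j. (-1) ^ j / real (j + c + 1) ^ 2"]
    by (simp add: sum_negf)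
  also have "\<dots> = beta_nat N c * (harm (N + c + 1) - harm c)
                   - beta_nat N (Suc c) * (harm (N + c + 2) - harm (Suc c))"
    using insert.IH[of c] insert.IH[of "Suc c"] by (simp add: N_def)
  also have "\<dots> = beta_nat (Suc N) c * (harm (N + c + 2) - harm c)"
  proof -
    have "harm (N + c + 2) = harm (N + c + 1) + 1 / real (N + c + 2)"
      using harm_Suc[of "N + c + 1"] by (simp add: inverse_eq_divide)
    moreover have "harm (Suc c) = harm c + 1 / real (c + 1)"
      using harm_Suc[of c] by (simp add: inverse_eq_divide)
    moreover have "B * (h - h') - B * c' / d * (h + 1 / d - (h' + 1 / c'))
        = B * (d - c') / d * (h + 1 / d - h')" if "d \<noteq> 0" "c' \<noteq> 0" for B h h' c' d :: real
      using that by (simp add: field_simps)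
    ultimately show ?thesis
      by (simp add: beta_nat_Suc_left beta_nat_Suc_right)
  qed
  finally show ?case
    using insert(1,2) by (simp add: N_def)
qed

text \<open>The term for \<open>B = {}\<close> is \<open>-1 / 0 = 0\<close>.\<close>
lemma sum_Pow_alternating_harm:
  assumes "finite A"
  shows "(\<Sum>B\<in>Pow A. (-1) ^ (card B + 1) / real (card B)) = harm (card A)"
  using assms
proof (induction A rule: finite_induct)
  case empty
  then show ?case by (simp add: harm_def)
next
  case (insert a A)
  have "(\<Sum>B\<in>Pow (insert a A). (-1) ^ (card B + 1) / real (card B))
      = harm (card A) + (\<Sum>B\<in>Pow A. (-1) ^ card B / real (card B + 0 + 1))"
    using sum_Pow_insert_card[OF insert(1,2), of "\<lambda>j. (-1) ^ (j + 1) / real j"] insert.IH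
    by simp
  then show ?case
    using insert(1,2) sum_Pow_alternating_inverse[OF insert(1), of 0]
    by (simp add: beta_nat_0_right harm_Suc inverse_eq_divide)
qed

lemma sum_Pow_containing_pair:
  assumes "finite A" "x \<in> A" "y \<in> A" "x \<noteq> y"
  shows "(\<Sum>B\<in>Pow A. if x \<in> B \<and> y \<in> B then f (card B) else 0)
       = (\<Sum>C\<in>Pow (A - {x, y}). f (card C + 2))"
proof -
  have "{B \<in> Pow A. x \<in> B \<and> y \<in> B} = (\<lambda>C. insert x (insert y C)) ` Pow (A - {x, y})"
  proof (intro equalityI subsetI)
    fix B assume "B \<in> {B \<in> Pow A. x \<in> B \<and> y \<in> B}"
    then have "B = insert x (insert y (B - {x, y}))" "B - {x, y} \<in> Pow (A - {x, y})" by auto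
    then show "B \<in> (\<lambda>C. insert x (insert y C)) ` Pow (A - {x, y})" by blast
  qed (use assms in auto)
  moreover have "inj_on (\<lambda>C. insert x (insert y C)) (Pow (A - {x, y}))"
    by (rule inj_on_inverseI[where g = "\<lambda>B. B - {x, y}"]) auto
  moreover have "card (insert x (insert y C)) = card C + 2" if "C \<in> Pow (A - {x, y})" for C
  proof -
    have "finite C" "x \<notin> insert y C" "y \<notin> C"
      using that assms finite_subset by auto
    then show ?thesis by simp
  qed
  ultimately show ?thesis
    using assms(1) by (simp add: sum.inter_filter[symmetric] sum.reindex)
qed

lemma sum_Pow_alternating_containing_pair:
  assumes "finite A" "x \<in> A" "y \<in> A" "x \<noteq> y"
  shows "(\<Sum>B\<in>Pow A. if x \<in> B \<and> y \<in> B then (-1) ^ (card B + 1) / real (card B) ^ 2 else 0)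
       = (1 - harm (card A)) / (real (card A) * (real (card A) - 1))"
proof -
  define N where "N = card (A - {x, y})"
  have "card {x, y} \<le> card A"
    using assms by (intro card_mono) auto
  then have A: "card A = N + 2"
    using assms by (simp add: N_def card_Diff_subset)
  have "(\<Sum>B\<in>Pow A. if x \<in> B \<and> y \<in> B then (-1) ^ (card B + 1) / real (card B) ^ 2 else 0)
      = - (\<Sum>C\<in>Pow (A - {x, y}). (-1) ^ card C / real (card C + 1 + 1) ^ 2)"
    by (subst sum_Pow_containing_pair[OF assms]) (simp add: sum_negf add.commute)
  also have "\<dots> = beta_nat N 1 * (1 - harm (N + 2))"
    using sum_Pow_alternating_inverse_square[of "A - {x, y}" 1] assms(1)
    by (simp add: N_def numeral_2_eq_2 harm_def algebra_simps)
  also have "beta_nat N 1 = 1 / (real (N + 2) * (real (N + 2) - 1))"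
    by (simp add: beta_nat_Suc_right beta_nat_0_right field_simps)
  finally show ?thesis
    by (simp add: A)
qed

lemma sum_Pow_alternating_card_Int_products:
  assumes "finite A" "B \<subseteq> A" "C \<subseteq> A" "B \<inter> C = {}"
  shows "(\<Sum>T\<in>Pow A. (-1) ^ (card T + 1) * (real (card (T \<inter> B)) * real (card (T \<inter> C)))
                        / real (card T) ^ 2)
       = real (card B * card C) * (1 - harm (card A)) / (real (card A) * (real (card A) - 1))"
proof -
  define w where "w T = (-1) ^ (card T + 1) / real (card T) ^ 2" for T :: "'a set"
  have fin: "finite B" "finite C"
    using assms by (auto intro: finite_subset)
  have card_Int: "real (card (T \<inter> D)) = (\<Sum>x\<in>D. if x \<in> T then 1 else 0)" if "finite D" for T D :: "'a set"
    using that by (simp add: sum.If_cases Int_commute)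
  have "real (card (T \<inter> B)) * real (card (T \<inter> C))
      = (\<Sum>x\<in>B. \<Sum>y\<in>C. if x \<in> T \<and> y \<in> T then 1 else 0)" for T
    unfolding card_Int[OF fin(1)] card_Int[OF fin(2)] sum_product by (intro sum.cong refl) auto
  then have "(\<Sum>T\<in>Pow A. (-1) ^ (card T + 1) * (real (card (T \<inter> B)) * real (card (T \<inter> C)))
                        / real (card T) ^ 2)
      = (\<Sum>T\<in>Pow A. \<Sum>x\<in>B. \<Sum>y\<in>C. if x \<in> T \<and> y \<in> T then w T else 0)"
    by (auto simp: w_def sum_distrib_left sum_divide_distrib intro!: sum.cong)
  also have "\<dots> = (\<Sum>x\<in>B. \<Sum>y\<in>C. \<Sum>T\<in>Pow A. if x \<in> T \<and> y \<in> T then w T else 0)"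
    by (subst sum.swap) (simp add: sum.swap[of _ "Pow A"])
  also have "\<dots> = (\<Sum>x\<in>B. \<Sum>y\<in>C. (1 - harm (card A)) / (real (card A) * (real (card A) - 1)))"
    unfolding w_def using assms
    by (intro sum.cong refl sum_Pow_alternating_containing_pair) auto
  finally show ?thesis
    by simp
qed

lemma card_eq_sum_card_Image:
  assumes "finite T" "finite I" "T \<subseteq> I \<times> UNIV"
  shows "card T = (\<Sum>i\<in>I. card (T `` {i}))"
proof -
  have "T = Sigma I (\<lambda>i. T `` {i})"
    using assms(3) by auto
  moreover have "finite (T `` {i})" for i
    using assms(1) by (rule finite_Image)
  ultimately show ?thesis
    using assms(2) by (metis card_SigmaI)
qed

definition cross_pairs :: "nat \<Rightarrow> (nat \<times> nat) set \<Rightarrow> real" where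
  "cross_pairs k T = (\<Sum>i<k. \<Sum>l<i. real (card (T `` {i})) * real (card (T `` {l})))"

lemma sum_Pow_Sigma_alternating_cross_pairs:
  fixes k :: nat
  assumes "\<forall>i<k. finite (A i)"
  defines "S \<equiv> card (Sigma {..<k} A)"
  shows "(\<Sum>T\<in>Pow (Sigma {..<k} A). (-1) ^ (card T + 1) * cross_pairs k T / real (card T) ^ 2)
       = (\<Sum>i<k. \<Sum>l<i. real (card (A i) * card (A l))) * (1 - harm S) / (real S * (real S - 1))"
proof -
  define Q where "Q = Sigma {..<k} A"
  define B where "B i = Q \<inter> {i} \<times> UNIV" for i
  have "finite Q"
    unfolding Q_def using assms(1) by (intro finite_SigmaI) auto
  have B: "B i \<subseteq> Q" "card (B i) = card (A i)" if "i < k" for i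
  proof -
    have "B i = {i} \<times> A i"
      using that by (auto simp: B_def Q_def)
    then show "B i \<subseteq> Q" "card (B i) = card (A i)"
      by (auto simp: B_def card_cartesian_product)
  qed
  have "card (T `` {i}) = card (T \<inter> B i)" if "T \<subseteq> Q" for T i
  proof -
    have "T \<inter> B i = Pair i ` (T `` {i})"
      using that by (auto simp: B_def)
    then show ?thesis
      by (simp add: card_image inj_on_def)
  qed
  then have "(\<Sum>T\<in>Pow Q. (-1) ^ (card T + 1) * cross_pairs k T / real (card T) ^ 2)
      = (\<Sum>i<k. \<Sum>l<i. \<Sum>T\<in>Pow Q. (-1) ^ (card T + 1)
            * (real (card (T \<inter> B i)) * real (card (T \<inter> B l))) / real (card T) ^ 2)"
    by (simp add: cross_pairs_def sum_distrib_left sum_divide_distrib sum.swap[of _ "Pow Q"])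
  also have "\<dots> = (\<Sum>i<k. \<Sum>l<i. real (card (A i) * card (A l)) * (1 - harm S) / (real S * (real S - 1)))"
  proof (intro sum.cong refl)
    fix i l assume "i \<in> {..<k}" "l \<in> {..<i}"
    then have "i < k" "l < k" "B i \<inter> B l = {}"
      by (auto simp: B_def)
    with B show "(\<Sum>T\<in>Pow Q. (-1) ^ (card T + 1)
            * (real (card (T \<inter> B i)) * real (card (T \<inter> B l))) / real (card T) ^ 2)
        = real (card (A i) * card (A l)) * (1 - harm S) / (real S * (real S - 1))"
      using sum_Pow_alternating_card_Int_products[OF \<open>finite Q\<close>, of "B i" "B l"]
      by (simp add: S_def Q_def)
  qed
  finally show ?thesis
    by (simp add: Q_def sum_distrib_right sum_divide_distrib)
qed

lemma sum_Pow_Sigma_leading_terms: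
  fixes k :: nat
  assumes "\<forall>i<k. finite (A i)"
  defines "S \<equiv> card (Sigma {..<k} A)"
  shows "(\<Sum>T\<in>Pow (Sigma {..<k} A).
            (-1) ^ (card T + 1) * (x / real (card T) + cross_pairs k T / real (card T) ^ 2))
       = x * harm S - (harm S - 1) * (\<Sum>i<k. \<Sum>l<i. real (card (A i) * card (A l)))
                                     / (real S * (real S - 1))"
proof -
  have "finite (Sigma {..<k} A)"
    using assms(1) by (intro finite_SigmaI) auto
  have "(-1) ^ (card T + 1) * (x / real (card T) + cross_pairs k T / real (card T) ^ 2)
      = x * ((-1) ^ (card T + 1) / real (card T)) + (-1) ^ (card T + 1) * cross_pairs k T / real (card T) ^ 2"
    for T :: "(nat \<times> nat) set"
    by (simp add: algebra_simps)
  then have "(\<Sum>T\<in>Pow (Sigma {..<k} A).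
            (-1) ^ (card T + 1) * (x / real (card T) + cross_pairs k T / real (card T) ^ 2))
      = x * (\<Sum>T\<in>Pow (Sigma {..<k} A). (-1) ^ (card T + 1) / real (card T))
        + (\<Sum>T\<in>Pow (Sigma {..<k} A). (-1) ^ (card T + 1) * cross_pairs k T / real (card T) ^ 2)"
    by (simp add: sum.distrib sum_distrib_left sum_subtractf sum_negf)
  moreover have "(h - 1) * y / d = - (y * (1 - h) / d)" for h y d :: real
    by (simp add: diff_divide_distrib algebra_simps)
  ultimately show ?thesis
    unfolding S_def sum_Pow_alternating_harm[OF \<open>finite (Sigma {..<k} A)\<close>]
      sum_Pow_Sigma_alternating_cross_pairs[OF assms(1)]
    by (simp only: diff_conv_add_uminus)
qed

lemma sum_pairs_less_eq_nested:
  fixes k :: nat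
  shows "(\<Sum>(i, j)\<in>{(i, j). i < j \<and> j < k}. f i j) = (\<Sum>j<k. \<Sum>i<j. f i j)"
proof -
  have "{(i, j). i < j \<and> j < k} = prod.swap ` (SIGMA j:{..<k}. {..<j})"
    by auto
  then show ?thesis
    by (simp add: sum.reindex sum.Sigma)
qed

section \<open>Second-order expansion of \<open>1 / (1 - (\<Prod>i<K. 1 - c i / n))\<close>\<close>

lemma prod_one_minus_divide_expansion:
  fixes c :: "nat \<Rightarrow> real"
  shows "(\<lambda>n. (\<Prod>i<K. 1 - c i / real n)
            - (1 - (\<Sum>i<K. c i) / real n + (\<Sum>i<K. \<Sum>l<i. c i * c l) / real n ^ 2))
         \<in> O(\<lambda>n. 1 / real n ^ 3)"
proof (induction K)
  case 0
  then show ?case by simp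
next
  case (Suc K)
  define a where "a = (\<Sum>i<K. c i)"
  define b where "b = (\<Sum>i<K. \<Sum>l<i. c i * c l)"
  define E where "E n = (\<Prod>i<K. 1 - c i / real n) - (1 - a / real n + b / real n ^ 2)" for n
  have "E \<in> O(\<lambda>n. 1 / real n ^ 3)"
    using Suc.IH unfolding E_def a_def b_def .
  moreover have "(\<lambda>n. 1 - c K / real n) \<in> O(\<lambda>_. 1)"
    by real_asymp
  ultimately have "(\<lambda>n. E n * (1 - c K / real n)) \<in> O(\<lambda>n. 1 / real n ^ 3)"
    by (rule landau_o.big_1_mult)
  moreover have "(\<lambda>n. b * c K / real n ^ 3) \<in> O(\<lambda>n. 1 / real n ^ 3)"
    by real_asymp
  ultimately have bigo: "(\<lambda>n. E n * (1 - c K / real n) - b * c K / real n ^ 3) \<in> O(\<lambda>n. 1 / real n ^ 3)"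
    by (rule sum_in_bigo)
  have "E n * (1 - c K / real n) - b * c K / real n ^ 3
      = (\<Prod>i<Suc K. 1 - c i / real n)
        - (1 - (\<Sum>i<Suc K. c i) / real n + (\<Sum>i<Suc K. \<Sum>l<i. c i * c l) / real n ^ 2)"
    if "n > 0" for n
  proof -
    have "(\<Sum>i<Suc K. \<Sum>l<i. c i * c l) = b + c K * a"
      by (simp add: a_def b_def sum_distrib_left)
    then show ?thesis
      using that by (simp add: E_def a_def field_simps power3_eq_cube power2_eq_square)
  qed
  then have "\<forall>\<^sub>F n in sequentially. E n * (1 - c K / real n) - b * c K / real n ^ 3
      = (\<Prod>i<Suc K. 1 - c i / real n)
        - (1 - (\<Sum>i<Suc K. c i) / real n + (\<Sum>i<Suc K. \<Sum>l<i. c i * c l) / real n ^ 2)"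
    by (rule eventually_mono[OF eventually_gt_at_top])
  then show ?case
    using bigo by (rule landau_o.big.in_cong[THEN iffD1])
qed

lemma quadratic_over_linear_expansion:
  fixes a b :: real and u :: "nat \<Rightarrow> real"
  assumes "a > 0" and "u \<longlonglongrightarrow> 0"
  shows "(\<lambda>n. real n ^ 2 / (a * real n - b - u n) - (real n / a + b / a ^ 2)) \<longlonglongrightarrow> 0"
proof -
  have inv: "(\<lambda>n. 1 / real n) \<longlonglongrightarrow> 0"
    by real_asymp
  have "(\<lambda>n. (b + u n) / real n) \<longlonglongrightarrow> 0"
    using tendsto_mult[OF tendsto_add[OF tendsto_const assms(2)] inv, of b] by simp
  then have den: "(\<lambda>n. a - (b + u n) / real n) \<longlonglongrightarrow> a - 0"
    by (intro tendsto_diff tendsto_const)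
  have "(\<lambda>n. (b ^ 2 + b * u n) / real n) \<longlonglongrightarrow> 0"
    using tendsto_mult[OF tendsto_add[OF tendsto_const tendsto_mult[OF tendsto_const assms(2)]] inv,
        of "b ^ 2" b] by simp
  then have "(\<lambda>n. (a * u n + (b ^ 2 + b * u n) / real n) / (a ^ 2 * (a - (b + u n) / real n)))
          \<longlonglongrightarrow> (a * 0 + 0) / (a ^ 2 * (a - 0))"
    using assms by (intro tendsto_divide tendsto_add tendsto_mult tendsto_const den) simp_all
  then have lim: "(\<lambda>n. (a * u n + (b ^ 2 + b * u n) / real n) / (a ^ 2 * (a - (b + u n) / real n)))
          \<longlonglongrightarrow> 0"
    by simp
  have "\<forall>\<^sub>F n in sequentially. a - (b + u n) / real n > 0"
    using den assms(1) by (intro order_tendstoD(1)) simp_all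
  then have "\<forall>\<^sub>F n in sequentially.
      (a * u n + (b ^ 2 + b * u n) / real n) / (a ^ 2 * (a - (b + u n) / real n))
      = real n ^ 2 / (a * real n - b - u n) - (real n / a + b / a ^ 2)"
    using eventually_gt_at_top[of 0]
  proof eventually_elim
    case (elim n)
    define x where "x = real n"
    have x: "x > 0" "a * x - b - u n > 0"
      using elim by (simp_all add: x_def field_simps)
    have "a - (b + u n) / x = (a * x - b - u n) / x"
      "a * u n + (b ^ 2 + b * u n) / x = (a * x * u n + b ^ 2 + b * u n) / x"
      using x by (simp_all add: field_simps)
    then have "(a * u n + (b ^ 2 + b * u n) / x) / (a ^ 2 * (a - (b + u n) / x))
        = (a * x * u n + b ^ 2 + b * u n) / (a ^ 2 * (a * x - b - u n))"
      using x by simp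
    also have "\<dots> = x ^ 2 / (a * x - b - u n) - (x / a + b / a ^ 2)"
      using x assms(1) by (simp add: field_simps power2_eq_square)
    finally show ?case
      by (simp add: x_def)
  qed
  with lim show ?thesis
    by (rule Lim_transform_eventually)
qed

lemma inverse_one_minus_prod_expansion:
  fixes c :: "nat \<Rightarrow> real" and K :: nat
  defines "a \<equiv> \<Sum>i<K. c i" and "b \<equiv> \<Sum>i<K. \<Sum>l<i. c i * c l"
  assumes "a > 0"
  shows "(\<lambda>n. 1 / (1 - (\<Prod>i<K. 1 - c i / real n)) - (real n / a + b / a ^ 2)) \<longlonglongrightarrow> 0"
proof -
  define E where "E n = (\<Prod>i<K. 1 - c i / real n) - (1 - a / real n + b / real n ^ 2)" for n
  have "E \<in> O(\<lambda>n. 1 / real n ^ 3)"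
    unfolding E_def a_def b_def by (rule prod_one_minus_divide_expansion)
  moreover have "(\<lambda>n. 1 / real n ^ 3) \<in> o(\<lambda>n. 1 / real n ^ 2)"
    by real_asymp
  ultimately have "((\<lambda>n. E n / (1 / real n ^ 2)) \<longlongrightarrow> 0) sequentially"
    by (rule smalloD_tendsto[OF landau_o.big_small_trans])
  then have "(\<lambda>n. real n ^ 2 / (a * real n - b - real n ^ 2 * E n) - (real n / a + b / a ^ 2))
               \<longlonglongrightarrow> 0"
    using assms(3) by (intro quadratic_over_linear_expansion) (simp_all add: mult.commute)
  moreover have "real n ^ 2 / (a * real n - b - real n ^ 2 * E n) - (real n / a + b / a ^ 2)
      = 1 / (1 - (\<Prod>i<K. 1 - c i / real n)) - (real n / a + b / a ^ 2)" if "n > 0" for n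
  proof -
    have "a * x - b - x ^ 2 * (p - (1 - a / x + b / x ^ 2)) = x ^ 2 * (1 - p)" if "x \<noteq> 0" for x p :: real
      using that by (simp add: field_simps power2_eq_square)
    then show ?thesis
      using that by (simp add: E_def)
  qed
  ultimately show ?thesis
    by (rule Lim_transform_eventually[OF _ eventually_mono[OF eventually_gt_at_top]])
qed

section \<open>The exact formula for the expected maximum\<close>

lemma (in finite_measure) measure_UN_inclusion_exclusion:
  assumes "finite I" "\<And>i. i \<in> I \<Longrightarrow> E i \<in> sets M"
  shows "measure M (\<Union>i\<in>I. E i)
       = (\<Sum>J | J \<subseteq> I \<and> J \<noteq> {}. (-1) ^ (card J + 1) * measure M (\<Inter>i\<in>J. E i))"
proof -
  interpret Incl_Excl "\<lambda>S. S \<in> sets M" "measure M"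
    by unfold_locales (auto simp: disjnt_def finite_measure_Union)
  show ?thesis
    using assms by (rule restricted_indexed)
qed

lemma (in finite_measure) integral_nat_function_eq_suminf:
  fixes f :: "'a \<Rightarrow> nat"
  assumes "f \<in> measurable M (count_space UNIV)"
    and "summable (\<lambda>t. measure M {x\<in>space M. t < f x})"
  shows "(\<integral>x. real (f x) \<partial>M) = (\<Sum>t. measure M {x\<in>space M. t < f x})"
proof -
  have "(\<integral>x. real (f x) \<partial>M) = enn2real (\<integral>\<^sup>+x. ennreal (real (f x)) \<partial>M)"
    using assms(1) by (intro integral_eq_nn_integral) auto
  also have "(\<integral>\<^sup>+x. ennreal (real (f x)) \<partial>M) = (\<integral>\<^sup>+x. of_nat (f x) \<partial>M)"
    by (simp add: ennreal_of_nat_eq_real_of_nat)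
  also have "(\<integral>\<^sup>+x. of_nat (f x) \<partial>M) = (\<Sum>t. ennreal (measure M {x\<in>space M. t < f x}))"
    using assms(1) by (simp add: nn_integral_nat_function emeasure_eq_measure)
  also have "\<dots> = ennreal (\<Sum>t. measure M {x\<in>space M. t < f x})"
    using assms(2) by (intro suminf_ennreal2) auto
  finally show ?thesis
    by (simp add: suminf_nonneg[OF assms(2)])
qed

lemma space_coupon_space [simp]: "space (coupon_space n) = UNIV"
  by (simp add: coupon_space_def space_PiM PiE_UNIV_domain)

lemma measurable_coupon_space_component [measurable]:
  "(\<lambda>\<omega>. \<omega> j) \<in> measurable (coupon_space n) (count_space UNIV)"
proof -
  have "sets (coupon_space n) = sets (PiM UNIV (\<lambda>_. count_space UNIV) :: ((nat \<times> nat) \<Rightarrow> nat) measure)"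
    unfolding coupon_space_def by (intro sets_PiM_cong) auto
  then show ?thesis
    by (simp add: measurable_cong_sets)
qed

lemma prob_space_coupon_space: "prob_space (coupon_space n)"
  unfolding coupon_space_def by (intro prob_space_PiM prob_space_measure_pmf)

lemma sets_coupon_space_cylinder:
  assumes "finite J"
  shows "{\<omega>. \<forall>j\<in>J. \<omega> j \<in> X j} \<in> sets (coupon_space n)"
proof -
  have "{\<omega>\<in>space (coupon_space n). \<forall>j\<in>J. \<omega> j \<in> X j} \<in> sets (coupon_space n)"
    using assms by measurable
  then show ?thesis
    by simp
qed

lemma measure_coupon_space_cylinder:
  assumes "finite J"
  shows "measure (coupon_space n) {\<omega>. \<forall>j\<in>J. \<omega> j \<in> X j}
       = (\<Prod>j\<in>J. measure_pmf.prob (pmf_of_set {..<n}) (X j))"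
proof -
  interpret product_prob_space "\<lambda>_. measure_pmf (pmf_of_set {..<n})" UNIV
    by unfold_locales
  have "emeasure (coupon_space n) {\<omega>. \<forall>j\<in>J. \<omega> j \<in> X j}
      = ennreal (\<Prod>j\<in>J. measure_pmf.prob (pmf_of_set {..<n}) (X j))"
    using emeasure_PiM_Collect[of J X] assms
    by (simp add: coupon_space_def space_PiM PiE_UNIV_domain measure_pmf.emeasure_eq_measure prod_ennreal)
  then show ?thesis
    by (simp add: measure_def prod_nonneg)
qed

lemma measure_pmf_of_lessThan_Compl:
  assumes "n > 0" "B \<subseteq> {..<n}"
  shows "measure_pmf.prob (pmf_of_set {..<n}) (- B) = 1 - real (card B) / real n"
proof -
  have "{..<n} \<inter> - B = {..<n} - B"
    by auto
  then have "card ({..<n} \<inter> - B) = n - card B"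
    using assms(2) by (simp add: card_Diff_subset finite_subset)
  moreover have "measure_pmf.prob (pmf_of_set {..<n}) (- B) = card ({..<n} \<inter> - B) / card {..<n}"
    using assms(1) by (intro measure_pmf_of_set) auto
  ultimately show ?thesis
    using card_mono[OF finite_lessThan assms(2)] assms(1) by (simp add: of_nat_diff field_simps)
qed

lemma AE_coupon_space_type_appears:
  assumes "a < n"
  shows "AE \<omega> in coupon_space n. \<exists>t. \<omega> (i, t) = a"
proof -
  interpret prob_space "coupon_space n"
    by (rule prob_space_coupon_space)
  define N where "N = {\<omega> :: (nat \<times> nat) \<Rightarrow> nat. \<forall>t. \<omega> (i, t) \<noteq> a}"
  have "N = {\<omega>\<in>space (coupon_space n). \<forall>t. \<omega> (i, t) \<noteq> a}"
    by (simp add: N_def)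
  also have "\<dots> \<in> sets (coupon_space n)"
    by measurable
  finally have N: "N \<in> sets (coupon_space n)" .
  have "prob N \<le> (1 - 1 / real n) ^ m" for m
  proof -
    have "prob N \<le> prob {\<omega>. \<forall>j\<in>{i} \<times> {..<m}. \<omega> j \<in> - {a}}"
      by (intro finite_measure_mono sets_coupon_space_cylinder) (auto simp: N_def)
    also have "\<dots> = (\<Prod>j\<in>{i} \<times> {..<m}. measure_pmf.prob (pmf_of_set {..<n}) (- {a}))"
      by (rule measure_coupon_space_cylinder) simp
    also have "\<dots> = (1 - 1 / real n) ^ m"
      using assms by (simp add: measure_pmf_of_lessThan_Compl)
    finally show ?thesis .
  qed
  moreover have "(\<lambda>m. (1 - 1 / real n) ^ m) \<longlonglongrightarrow> 0"
    using assms by (intro LIMSEQ_power_zero) auto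
  ultimately have "prob N \<le> 0"
    by (intro LIMSEQ_le_const[of "\<lambda>m. (1 - 1 / real n) ^ m"]) auto
  then have "N \<in> null_sets (coupon_space n)"
    using N by (simp add: null_sets_def emeasure_eq_measure measure_le_0_iff)
  then show ?thesis
    by (rule AE_I') (auto simp: N_def)
qed

definition unseen :: "nat \<Rightarrow> nat \<times> nat \<Rightarrow> ((nat \<times> nat) \<Rightarrow> nat) set" where
  "unseen m x = {\<omega>. \<forall>t<m. \<omega> (fst x, t) \<noteq> snd x}"

text \<open>The probability that in one time step no player \<open>i\<close> draws a type in \<open>T `` {i}\<close>.\<close>
definition avoid_prob :: "nat \<Rightarrow> nat \<Rightarrow> (nat \<times> nat) set \<Rightarrow> real" where
  "avoid_prob n k T = (\<Prod>i<k. 1 - real (card (T `` {i})) / real n)"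

lemma sets_unseen [measurable]: "unseen m x \<in> sets (coupon_space n)"
proof -
  have "unseen m x = {\<omega>. \<forall>j\<in>{fst x} \<times> {..<m}. \<omega> j \<in> - {snd x}}"
    by (auto simp: unseen_def)
  then show ?thesis
    by (simp only: sets_coupon_space_cylinder finite_SigmaI finite_lessThan finite.intros)
qed

lemma measure_Inter_unseen:
  assumes "n > 0" "T \<subseteq> {..<k} \<times> {..<n}"
  shows "measure (coupon_space n) (\<Inter>x\<in>T. unseen m x) = avoid_prob n k T ^ m"
proof -
  have "(\<Inter>x\<in>T. unseen m x) = {\<omega>. \<forall>j\<in>{..<k} \<times> {..<m}. \<omega> j \<in> - (T `` {fst j})}"
    using assms(2) by (fastforce simp: unseen_def)
  then have "measure (coupon_space n) (\<Inter>x\<in>T. unseen m x)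
      = (\<Prod>j\<in>{..<k} \<times> {..<m}. measure_pmf.prob (pmf_of_set {..<n}) (- (T `` {fst j})))"
    by (simp only: measure_coupon_space_cylinder finite_cartesian_product finite_lessThan)
  also have "\<dots> = (\<Prod>j\<in>{..<k} \<times> {..<m}. 1 - real (card (T `` {fst j})) / real n)"
    using assms by (intro prod.cong refl measure_pmf_of_lessThan_Compl) auto
  also have "\<dots> = (\<Prod>i<k. \<Prod>t<m. 1 - real (card (T `` {i})) / real n)"
    by (subst prod.cartesian_product) (simp add: case_prod_beta)
  also have "\<dots> = avoid_prob n k T ^ m"
    by (simp add: avoid_prob_def prod_power_distrib)
  finally show ?thesis .
qed

lemma measure_UN_unseen:
  assumes "n > 0" "P \<subseteq> {..<k} \<times> {..<n}"
  shows "measure (coupon_space n) (\<Union>x\<in>P. unseen m x)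
       = (\<Sum>T | T \<subseteq> P \<and> T \<noteq> {}. (-1) ^ (card T + 1) * avoid_prob n k T ^ m)"
proof -
  interpret prob_space "coupon_space n"
    by (rule prob_space_coupon_space)
  have "finite P"
    using assms(2) by (rule finite_subset) simp
  then have "measure (coupon_space n) (\<Union>x\<in>P. unseen m x)
      = (\<Sum>T | T \<subseteq> P \<and> T \<noteq> {}. (-1) ^ (card T + 1) * measure (coupon_space n) (\<Inter>x\<in>T. unseen m x))"
    by (rule measure_UN_inclusion_exclusion) simp
  also have "\<dots> = (\<Sum>T | T \<subseteq> P \<and> T \<noteq> {}. (-1) ^ (card T + 1) * avoid_prob n k T ^ m)"
  proof (intro sum.cong refl)
    fix T assume "T \<in> {T. T \<subseteq> P \<and> T \<noteq> {}}"
    then have "T \<subseteq> {..<k} \<times> {..<n}"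
      using assms(2) by auto
    then show "(-1) ^ (card T + 1) * measure (coupon_space n) (\<Inter>x\<in>T. unseen m x)
        = (-1) ^ (card T + 1) * avoid_prob n k T ^ m"
      using assms(1) by (simp add: measure_Inter_unseen)
  qed
  finally show ?thesis .
qed

lemma avoid_prob_bounds:
  assumes "n > 0" "T \<subseteq> {..<k} \<times> {..<n}" "T \<noteq> {}"
  shows "0 \<le> avoid_prob n k T" "avoid_prob n k T < 1"
proof -
  have card_le: "card (T `` {i}) \<le> n" for i
    using assms(2) by (intro card_mono[of "{..<n}", simplified]) auto
  then have factor: "0 \<le> 1 - real (card (T `` {i})) / real n" "1 - real (card (T `` {i})) / real n \<le> 1" for i
    using assms(1) by (simp_all add: field_simps)
  then show "0 \<le> avoid_prob n k T"
    unfolding avoid_prob_def by (intro prod_nonneg) auto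
  obtain i a where ia: "(i, a) \<in> T"
    using assms(3) by auto
  then have "i < k"
    using assms(2) by auto
  have "T `` {i} \<noteq> {}" "finite (T `` {i})"
    using ia assms(2) by (auto intro: finite_subset[of _ "{..<n}"])
  then have "1 - real (card (T `` {i})) / real n < 1"
    using assms(1) by (simp add: card_gt_0_iff)
  moreover have "avoid_prob n k T = (1 - real (card (T `` {i})) / real n)
      * (\<Prod>l\<in>{..<k} - {i}. 1 - real (card (T `` {l})) / real n)"
    unfolding avoid_prob_def using \<open>i < k\<close> by (intro prod.remove) auto
  moreover have "(\<Prod>l\<in>{..<k} - {i}. 1 - real (card (T `` {l})) / real n) \<le> 1"
    using factor by (intro prod_le_1) auto
  ultimately show "avoid_prob n k T < 1"
    using factor(1)[of i] by (smt (verit) mult_left_le)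
qed

lemma less_completion_time_iff:
  assumes "finite A" "A \<subseteq> range f"
  shows "m < completion_time A f \<longleftrightarrow> \<not> A \<subseteq> f ` {..<m}"
proof -
  obtain C where "finite C" "A = f ` C"
    using finite_subset_image[OF assms] by blast
  then obtain m0 where "A \<subseteq> f ` {..<m0}"
    using finite_nat_bounded[of C] by blast
  then have "A \<subseteq> f ` {..<completion_time A f}"
    unfolding completion_time_def by (rule LeastI)
  then show ?thesis
    unfolding completion_time_def
    by (meson image_mono lessThan_subset_iff not_less not_less_Least order_trans)
qed

lemma measurable_completion_time [measurable]:
  "(\<lambda>\<omega>. completion_time A (\<lambda>t. \<omega> (i, t))) \<in> measurable (coupon_space n) (count_space UNIV)"
proof -
  have eq: "(\<lambda>\<omega>. completion_time A (\<lambda>t. \<omega> (i, t)))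
      = (\<lambda>\<omega>. LEAST m. \<forall>a\<in>A. \<exists>t<m. \<omega> (i, t) = a)"
    unfolding completion_time_def by (intro ext arg_cong[where f = Least]) (auto simp: subset_iff image_iff)
  show ?thesis
    unfolding eq by measurable
qed

lemma measurable_max_completion_time [measurable]:
  "(\<lambda>\<omega>. Max ((\<lambda>i. completion_time (A i) (\<lambda>t. \<omega> (i, t))) ` {..<k}))
     \<in> measurable (coupon_space n) (count_space UNIV)"
proof -
  have eq: "(\<lambda>\<omega>. Max ((\<lambda>i. completion_time (A i) (\<lambda>t. \<omega> (i, t))) ` {..<k}))
      = (\<lambda>\<omega>. Max {y. \<exists>i<k. completion_time (A i) (\<lambda>t. \<omega> (i, t)) = y})"
    by (intro ext arg_cong[where f = Max]) auto
  show ?thesis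
    unfolding eq by measurable
qed

lemma measure_less_max_completion_time:
  assumes "n > 0" "k > 0" "\<forall>i<k. A i \<subseteq> {..<n}"
  shows "measure (coupon_space n) {\<omega>. m < Max ((\<lambda>i. completion_time (A i) (\<lambda>t. \<omega> (i, t))) ` {..<k})}
       = measure (coupon_space n) (\<Union>x\<in>Sigma {..<k} A. unseen m x)"
proof (rule measure_eq_AE)
  have fin: "finite (Sigma {..<k} A)"
    using assms(3) by (auto intro: finite_subset[of _ "{..<n}"])
  \<comment> \<open>a type that never appears would make \<open>completion_time\<close> the junk value \<open>LEAST\<close> of an
    empty set; this happens only on a null set\<close>
  have "AE \<omega> in coupon_space n. \<forall>x\<in>Sigma {..<k} A. \<exists>t. \<omega> (fst x, t) = snd x"
    using assms(3) by (intro AE_finite_allI[OF fin]) (fastforce intro!: AE_coupon_space_type_appears)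
  then show "AE \<omega> in coupon_space n.
      \<omega> \<in> {\<omega>. m < Max ((\<lambda>i. completion_time (A i) (\<lambda>t. \<omega> (i, t))) ` {..<k})}
      \<longleftrightarrow> \<omega> \<in> (\<Union>x\<in>Sigma {..<k} A. unseen m x)"
  proof eventually_elim
    case (elim \<omega>)
    then have cover: "A i \<subseteq> range (\<lambda>t. \<omega> (i, t))" "finite (A i)" if "i < k" for i
      using that assms(3) by (fastforce intro: finite_subset[of _ "{..<n}"])+
    have "m < Max ((\<lambda>i. completion_time (A i) (\<lambda>t. \<omega> (i, t))) ` {..<k})
        \<longleftrightarrow> (\<exists>i<k. m < completion_time (A i) (\<lambda>t. \<omega> (i, t)))"
      using assms(2) by (subst Max_gr_iff) auto
    also have "\<dots> \<longleftrightarrow> (\<exists>i<k. \<not> A i \<subseteq> (\<lambda>t. \<omega> (i, t)) ` {..<m})"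
      using cover by (simp add: less_completion_time_iff cong: conj_cong)
    finally show ?case
      by (fastforce simp: unseen_def subset_iff image_iff)
  qed
  have "(\<lambda>\<omega>. Max ((\<lambda>i. completion_time (A i) (\<lambda>t. \<omega> (i, t))) ` {..<k})) -` {m<..}
      \<inter> space (coupon_space n) \<in> sets (coupon_space n)"
    by (rule measurable_sets[OF measurable_max_completion_time]) simp
  then show "{\<omega>. m < Max ((\<lambda>i. completion_time (A i) (\<lambda>t. \<omega> (i, t))) ` {..<k})} \<in> sets (coupon_space n)"
    by (simp add: vimage_def)
  show "(\<Union>x\<in>Sigma {..<k} A. unseen m x) \<in> sets (coupon_space n)"
    using fin by (intro sets.finite_UN sets_unseen) auto
qed

text \<open>The summand for \<open>T = {}\<close> vanishes, since \<open>avoid_prob n k {} = 1\<close> and \<open>x / 0 = 0\<close>.\<close>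
lemma max_completion_eq_sum:
  assumes "n > 0" "k > 0" "\<forall>i<k. A i \<subseteq> {..<n}"
  shows "max_completion n k A
       = (\<Sum>T\<in>Pow (Sigma {..<k} A). (-1) ^ (card T + 1) / (1 - avoid_prob n k T))"
proof -
  interpret prob_space "coupon_space n"
    by (rule prob_space_coupon_space)
  define P where "P = Sigma {..<k} A"
  define Y where "Y \<omega> = Max ((\<lambda>i. completion_time (A i) (\<lambda>t. \<omega> (i, t))) ` {..<k})" for \<omega>
  define \<T> where "\<T> = {T. T \<subseteq> P \<and> T \<noteq> {}}"
  have P: "P \<subseteq> {..<k} \<times> {..<n}"
    using assms(3) by (auto simp: P_def)
  then have "finite P"
    by (rule finite_subset) simp
  have q: "0 \<le> avoid_prob n k T" "avoid_prob n k T < 1" if "T \<in> \<T>" for T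
    using avoid_prob_bounds[OF assms(1), of T k] that P by (auto simp: \<T>_def)
  have "(\<lambda>m. prob {\<omega>\<in>space (coupon_space n). m < Y \<omega>})
      = (\<lambda>m. \<Sum>T\<in>\<T>. (-1) ^ (card T + 1) * avoid_prob n k T ^ m)"
    using measure_less_max_completion_time[OF assms] measure_UN_unseen[OF assms(1) P]
    by (simp add: Y_def P_def \<T>_def)
  also have "\<dots> sums (\<Sum>T\<in>\<T>. (-1) ^ (card T + 1) * (1 / (1 - avoid_prob n k T)))"
    using q by (intro sums_sum sums_mult geometric_sums) auto
  finally have sums: "(\<lambda>m. prob {\<omega>\<in>space (coupon_space n). m < Y \<omega>})
      sums (\<Sum>T\<in>\<T>. (-1) ^ (card T + 1) / (1 - avoid_prob n k T))"
    by simp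
  have "max_completion n k A = (\<integral>\<omega>. real (Y \<omega>) \<partial>coupon_space n)"
    by (simp add: max_completion_def Y_def)
  also have "\<dots> = (\<Sum>m. prob {\<omega>\<in>space (coupon_space n). m < Y \<omega>})"
    using sums unfolding Y_def by (intro integral_nat_function_eq_suminf) (auto simp: sums_iff)
  also have "\<dots> = (\<Sum>T\<in>\<T>. (-1) ^ (card T + 1) / (1 - avoid_prob n k T))"
    using sums by (rule sums_unique[symmetric])
  also have "\<dots> = (\<Sum>T\<in>Pow P. (-1) ^ (card T + 1) / (1 - avoid_prob n k T))"
  proof -
    have "Pow P = insert {} \<T>" "{} \<notin> \<T>" "finite \<T>"
      using \<open>finite P\<close> by (auto simp: \<T>_def)
    then show ?thesis
      by (simp add: avoid_prob_def)
  qed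
  finally show ?thesis
    by (simp add: P_def)
qed

lemma bij_betw_Sigma_fiberwise:
  assumes "\<forall>i\<in>I. bij_betw (h i) (A i) (B i)"
  shows "bij_betw (\<lambda>(i, a). (i, h i a)) (Sigma I A) (Sigma I B)"
proof (rule bij_betwI')
  show "(\<lambda>(i, a). (i, h i a)) x = (\<lambda>(i, a). (i, h i a)) y \<longleftrightarrow> x = y"
    if "x \<in> Sigma I A" "y \<in> Sigma I A" for x y
    using that assms by (auto simp: bij_betw_def inj_on_def)
  show "(\<lambda>(i, a). (i, h i a)) x \<in> Sigma I B" if "x \<in> Sigma I A" for x
    using that assms by (auto simp: bij_betw_def)
  show "\<exists>x\<in>Sigma I A. y = (\<lambda>(i, a). (i, h i a)) x" if "y \<in> Sigma I B" for y
    using that assms by (fastforce simp: bij_betw_def)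
qed

lemma sum_Pow_Sigma_bij_invariant:
  assumes "\<forall>i\<in>I. bij_betw (h i) (A i) (B i)"
  shows "(\<Sum>T\<in>Pow (Sigma I A). F (card T) (\<lambda>i. card (T `` {i})))
       = (\<Sum>T\<in>Pow (Sigma I B). F (card T) (\<lambda>i. card (T `` {i})))"
proof -
  define e where "e = (\<lambda>(i, a). (i, h i a))"
  have e: "bij_betw e (Sigma I A) (Sigma I B)"
    unfolding e_def using assms by (rule bij_betw_Sigma_fiberwise)
  have card_e: "card (e ` T) = card T" "card ((e ` T) `` {i}) = card (T `` {i})"
    if "T \<subseteq> Sigma I A" for T i
  proof -
    have inj: "inj_on e T"
      using e that by (auto simp: bij_betw_def intro: inj_on_subset)
    then show "card (e ` T) = card T"
      by (rule card_image)
    have "(e ` T) `` {i} = h i ` (T `` {i})"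
      by (force simp: e_def)
    moreover have "inj_on (h i) (T `` {i})"
      using that assms by (cases "i \<in> I") (auto simp: bij_betw_def intro: inj_on_subset)
    ultimately show "card ((e ` T) `` {i}) = card (T `` {i})"
      by (simp add: card_image)
  qed
  have "(\<Sum>T\<in>Pow (Sigma I B). F (card T) (\<lambda>i. card (T `` {i})))
      = (\<Sum>T\<in>Pow (Sigma I A). F (card (e ` T)) (\<lambda>i. card ((e ` T) `` {i})))"
    by (rule sum.reindex_bij_betw[OF bij_betw_Pow[OF e], symmetric])
  also have "\<dots> = (\<Sum>T\<in>Pow (Sigma I A). F (card T) (\<lambda>i. card (T `` {i})))"
    by (intro sum.cong refl) (simp add: card_e)
  finally show ?thesis ..
qed

lemma max_completion_relabel:
  assumes "n > 0" "k > 0" "\<forall>i<k. A i \<subseteq> {..<n}" "\<forall>i<k. B i \<subseteq> {..<n}"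
    and "\<forall>i<k. card (A i) = card (B i)"
  shows "max_completion n k A = max_completion n k B"
proof -
  have "\<forall>i\<in>{..<k}. \<exists>h. bij_betw h (A i) (B i)"
    using assms(3-5) by (auto intro!: finite_same_card_bij intro: finite_subset[of _ "{..<n}"])
  then obtain h where "\<forall>i\<in>{..<k}. bij_betw (h i) (A i) (B i)"
    by metis
  then have "(\<Sum>T\<in>Pow (Sigma {..<k} A). F (card T) (\<lambda>i. card (T `` {i})))
      = (\<Sum>T\<in>Pow (Sigma {..<k} B). F (card T) (\<lambda>i. card (T `` {i})))"
    for F :: "nat \<Rightarrow> (nat \<Rightarrow> nat) \<Rightarrow> real"
    by (rule sum_Pow_Sigma_bij_invariant)
  from this[of "\<lambda>c p. (-1) ^ (c + 1) / (1 - (\<Prod>i<k. 1 - real (p i) / real n))"] show ?thesis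
    using assms(1-4) by (simp only: max_completion_eq_sum avoid_prob_def)
qed

section \<open>The asymptotic formula\<close>

lemma inverse_one_minus_avoid_prob_expansion:
  assumes "finite T" "T \<subseteq> {..<k} \<times> UNIV" "T \<noteq> {}"
  shows "(\<lambda>n. 1 / (1 - avoid_prob n k T)
            - (real n / real (card T) + cross_pairs k T / real (card T) ^ 2)) \<longlonglongrightarrow> 0"
proof -
  have card_T: "real (card T) = (\<Sum>i<k. real (card (T `` {i})))"
    using assms(1,2) by (subst card_eq_sum_card_Image[of _ "{..<k}"]) auto
  have "real (card T) > 0"
    using assms(1,3) by (simp add: card_gt_0_iff)
  then show ?thesis
    unfolding avoid_prob_def cross_pairs_def card_T by (rule inverse_one_minus_prod_expansion)
qed

lemma max_completion_lessThan_asymptotics: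
  fixes k :: nat and s :: "nat \<Rightarrow> nat"
  assumes "k > 0"
  defines "S \<equiv> \<Sum>i<k. s i"
  shows "(\<lambda>n. max_completion n k (\<lambda>i. {..<s i})
            - (real n * harm S - (harm S - 1) * (\<Sum>i<k. \<Sum>l<i. real (s i * s l))
                                  / (real S * (real S - 1))))
         \<longlonglongrightarrow> 0"
proof -
  define Q where "Q = Sigma {..<k} (\<lambda>i. {..<s i})"
  have "finite Q" "card Q = S"
    by (simp_all add: Q_def S_def)
  define g where "g n T = (-1) ^ (card T + 1) / (1 - avoid_prob n k T)
      - (-1) ^ (card T + 1) * (real n / real (card T) + cross_pairs k T / real (card T) ^ 2)" for n T
  have "(\<lambda>n. g n T) \<longlonglongrightarrow> 0" if "T \<in> Pow Q" for T
  proof (cases "T = {}")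
    case False
    have "finite T" "T \<subseteq> {..<k} \<times> UNIV"
      using that \<open>finite Q\<close> by (auto simp: Q_def intro: finite_subset)
    with False have "(\<lambda>n. (-1) ^ (card T + 1) * (1 / (1 - avoid_prob n k T)
        - (real n / real (card T) + cross_pairs k T / real (card T) ^ 2))) \<longlonglongrightarrow> 0"
      by (intro tendsto_mult_right_zero inverse_one_minus_avoid_prob_expansion)
    then show ?thesis
      by (simp add: g_def right_diff_distrib)
  qed (simp add: g_def avoid_prob_def)
  then have "(\<lambda>n. \<Sum>T\<in>Pow Q. g n T) \<longlonglongrightarrow> 0"
    by (rule tendsto_null_sum)
  moreover have "(\<Sum>T\<in>Pow Q. g n T) = max_completion n k (\<lambda>i. {..<s i})
      - (real n * harm S - (harm S - 1) * (\<Sum>i<k. \<Sum>l<i. real (s i * s l)) / (real S * (real S - 1)))"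
    if "n > S" for n
  proof -
    have "s i \<le> S" if "i < k" for i
      unfolding S_def using that by (intro member_le_sum) auto
    with \<open>n > S\<close> assms(1) have "max_completion n k (\<lambda>i. {..<s i})
        = (\<Sum>T\<in>Pow Q. (-1) ^ (card T + 1) / (1 - avoid_prob n k T))"
      unfolding Q_def by (intro max_completion_eq_sum) fastforce+
    with \<open>card Q = S\<close> show ?thesis
      using sum_Pow_Sigma_leading_terms[of k "\<lambda>i. {..<s i}" "real n"]
      by (simp add: g_def sum_subtractf sum_negf Q_def)
  qed
  ultimately show ?thesis
    by (rule Lim_transform_eventually[OF _ eventually_mono[OF eventually_gt_at_top]])
qed

theorem mainTheorem2:
  fixes k :: nat and s :: "nat \<Rightarrow> nat" and A :: "nat \<Rightarrow> nat \<Rightarrow> nat set"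
  assumes "k \<ge> 1"
    and "\<forall>\<^sub>F n in sequentially. \<forall>i<k. A n i \<subseteq> {..<n} \<and> card (A n i) = s i"
  shows "(\<lambda>n. max_completion n k (A n)
            - (real n * harm (\<Sum>i<k. s i)
               - (harm (\<Sum>i<k. s i) - 1)
                 * (\<Sum>(i,j)\<in>{(i,j). i < j \<and> j < k}. real (s i * s j))
                 / (real (\<Sum>i<k. s i) * (real (\<Sum>i<k. s i) - 1))))
         \<longlonglongrightarrow> 0"
proof -
  have "\<forall>\<^sub>F n in sequentially. max_completion n k (\<lambda>i. {..<s i}) = max_completion n k (A n)"
    using assms(2) eventually_gt_at_top[of 0]
  proof eventually_elim
    case (elim n)
    then have "s i \<le> n" if "i < k" for i
      using that card_mono[OF finite_lessThan, of "A n i" n] by auto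
    with elim assms(1) show ?case
      by (intro max_completion_relabel) auto
  qed
  moreover have "(\<Sum>(i, j)\<in>{(i, j). i < j \<and> j < k}. real (s i * s j)) = (\<Sum>i<k. \<Sum>l<i. real (s i * s l))"
    by (simp add: sum_pairs_less_eq_nested mult.commute)
  ultimately show ?thesis
    using max_completion_lessThan_asymptotics[of k s] assms(1)
    by (auto elim!: Lim_transform_eventually eventually_mono)
qed

end
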